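(* For every set $Q\subseteq\{0,1\}^n$ of at most $q=2^{0.01\sqrt n}$ points, $\Pr_{\mathbf A}[\mathsf{Bad}_J]=o_n(1)$.
   Context: Let $n$ be even and $a=n/2$. $\mathbf A\subseteq[n]$ is a uniformly random set of size $a$ and $\mathbf C=[n]\setminus\mathbf A$; $x_B$ denotes the restriction of $x$ to $B$ and $|z|$ the Hamming weight. The event $\mathsf{Bad}_J$ holds iff there exist $x,y\in Q$ with $x_{\mathbf C}=y_{\mathbf C}$, $|x_{\mathbf A}|>a/2+0.05\sqrt a$ and $|y_{\mathbf A}|<a/2-0.05\sqrt a$. *)

theory Defs
  imports Complex_Main
begin

text \<open>Points of the cube {0,1}^n are encoded as subsets x of {0..<n} (the support).
  Then x restricted to B is determined by x \<inter> B and its Hamming weight is card (x \<inter> B).\<close>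

definition Bad :: "nat \<Rightarrow> nat set set \<Rightarrow> nat set \<Rightarrow> bool" where
  "Bad n Q A \<longleftrightarrow>
     (let a = n div 2; C = {0..<n} - A in
      \<exists>x\<in>Q. \<exists>y\<in>Q. x \<inter> C = y \<inter> C
        \<and> real (card (x \<inter> A)) > real a / 2 + 0.05 * sqrt (real a)
        \<and> real (card (y \<inter> A)) < real a / 2 - 0.05 * sqrt (real a))"

definition prob_Bad :: "nat \<Rightarrow> nat set set \<Rightarrow> real" where
  "prob_Bad n Q =
     real (card {A. A \<subseteq> {0..<n} \<and> card A = n div 2 \<and> Bad n Q A})
     / real (n choose (n div 2))"

end

theory Submission
  imports Defs "HOL-Real_Asymp.Real_Asymp"
begin

text \<open>If \<open>x\<close> and \<open>y\<close> agree outside \<open>A\<close> then \<open>x - y \<subseteq> A\<close>, and the weights of \<open>x\<close> and \<open>y\<close>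
  on \<open>A\<close> differ by at most \<open>|x - y|\<close>; so \<open>Bad\<close> forces a set \<open>x - y\<close> of size more than
  \<open>0.1 \<surd>a\<close> inside \<open>A\<close>. A uniformly random half-size set contains a fixed set \<open>D\<close> with
  probability at most \<open>2^-|D|\<close>, and a union bound over the at most \<open>q\<^sup>2\<close> pairs gives
  \<open>Pr[Bad] \<le> q\<^sup>2 2^(-0.1 \<surd>a) \<le> 2^(-0.05 \<surd>n)\<close>.\<close>

lemma binomial_ge_twice_pred:
  assumes "k \<ge> 1" "2 * k \<le> n"
  shows "2 * (n - 1 choose (k - 1)) \<le> n choose k"
proof -
  have "k * (n choose k) = n * (n - 1 choose (k - 1))"
    using times_binomial_minus1_eq[of k n] assms by simp
  then have "k * (2 * (n - 1 choose (k - 1))) \<le> k * (n choose k)"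
    using assms by (simp add: mult.assoc[symmetric])
  then show ?thesis using assms by simp
qed

lemma power_two_mult_binomial_le:
  "d \<le> k \<Longrightarrow> 2 * k \<le> n \<Longrightarrow> 2 ^ d * (n - d choose (k - d)) \<le> n choose k"
proof (induction d arbitrary: n k)
  case 0
  then show ?case by simp
next
  case (Suc d)
  have IH: "2 ^ d * (n - 1 - d choose (k - 1 - d)) \<le> n - 1 choose (k - 1)"
    using Suc by (intro Suc.IH) auto
  have "2 ^ Suc d * (n - Suc d choose (k - Suc d))
      = 2 * (2 ^ d * (n - 1 - d choose (k - 1 - d)))"
    by (simp add: diff_diff_add)
  also have "\<dots> \<le> 2 * (n - 1 choose (k - 1))" using IH by simp
  also have "\<dots> \<le> n choose k" using Suc by (intro binomial_ge_twice_pred) auto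
  finally show ?case .
qed

lemma card_subsets_containing_le:
  assumes "finite S" "D \<subseteq> S" "2 * k \<le> card S"
  shows "2 ^ card D * card {A. A \<subseteq> S \<and> card A = k \<and> D \<subseteq> A} \<le> card S choose k"
proof (cases "card D \<le> k")
  case False
  with assms have none: "{A. A \<subseteq> S \<and> card A = k \<and> D \<subseteq> A} = {}"
    by (auto dest: card_mono[OF finite_subset])
  show ?thesis unfolding none by simp
next
  case True
  have "finite D" using assms finite_subset by blast
  have "inj_on (\<lambda>A. A - D) {A. A \<subseteq> S \<and> card A = k \<and> D \<subseteq> A}"
    by (rule inj_onI) blast
  moreover have "(\<lambda>A. A - D) ` {A. A \<subseteq> S \<and> card A = k \<and> D \<subseteq> A}
      \<subseteq> {B. B \<subseteq> S - D \<and> card B = k - card D}"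
    using \<open>finite D\<close> by (auto simp: card_Diff_subset)
  ultimately have "card {A. A \<subseteq> S \<and> card A = k \<and> D \<subseteq> A}
      \<le> card {B. B \<subseteq> S - D \<and> card B = k - card D}"
    using assms(1) by (intro card_inj_on_le) auto
  also have "\<dots> = (card S - card D) choose (k - card D)"
    using assms \<open>finite D\<close> by (simp add: n_subsets card_Diff_subset)
  finally have "2 ^ card D * card {A. A \<subseteq> S \<and> card A = k \<and> D \<subseteq> A}
      \<le> 2 ^ card D * ((card S - card D) choose (k - card D))" by simp
  also have "\<dots> \<le> card S choose k" using power_two_mult_binomial_le[OF True assms(3)] .
  finally show ?thesis .
qed

lemma card_Int_le_card_Int_add_card_Diff:
  assumes "finite A" "x - y \<subseteq> A"
  shows "card (x \<inter> A) \<le> card (y \<inter> A) + card (x - y)"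
proof -
  have "card (x \<inter> A) \<le> card ((y \<inter> A) \<union> (x - y))"
    using assms by (intro card_mono) (auto intro: finite_subset)
  also have "\<dots> \<le> card (y \<inter> A) + card (x - y)" by (rule card_Un_le)
  finally show ?thesis .
qed

lemma Bad_obtains_large_difference:
  assumes "Bad n Q A" "A \<subseteq> {0..<n}" "Q \<subseteq> Pow {0..<n}"
  obtains x y where "x \<in> Q" "y \<in> Q" "x - y \<subseteq> A"
    "real (card (x - y)) > 0.1 * sqrt (real (n div 2))"
proof -
  define a where "a = n div 2"
  obtain x y where xy: "x \<in> Q" "y \<in> Q" "x \<inter> ({0..<n} - A) = y \<inter> ({0..<n} - A)"
    "real (card (x \<inter> A)) > real a / 2 + 0.05 * sqrt (real a)"
    "real (card (y \<inter> A)) < real a / 2 - 0.05 * sqrt (real a)"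
    using assms(1) unfolding Bad_def Let_def a_def by blast
  have "x \<subseteq> {0..<n}" using xy(1) assms(3) by blast
  with xy(3) have "x - y \<subseteq> A" by blast
  moreover have "finite A" using assms(2) finite_subset by blast
  ultimately have "card (x \<inter> A) \<le> card (y \<inter> A) + card (x - y)"
    by (rule card_Int_le_card_Int_add_card_Diff[rotated])
  moreover have "0.1 * sqrt (real a) = 0.05 * sqrt (real a) + 0.05 * sqrt (real a)" by simp
  ultimately have "real (card (x - y)) > 0.1 * sqrt (real a)" using xy(4,5) by linarith
  with xy(1,2) \<open>x - y \<subseteq> A\<close> show ?thesis using that unfolding a_def by blast
qed

lemma card_half_subsets_containing_le_powr:
  assumes "D \<subseteq> {0..<n}" "t \<le> real (card D)"
  shows "real (card {A. A \<subseteq> {0..<n} \<and> card A = n div 2 \<and> D \<subseteq> A})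
    \<le> real (n choose (n div 2)) * 2 powr (- t)"
proof -
  have "2 ^ card D * card {A. A \<subseteq> {0..<n} \<and> card A = n div 2 \<and> D \<subseteq> A} \<le> n choose (n div 2)"
    using card_subsets_containing_le[of "{0..<n}" D "n div 2"] assms(1) by simp
  from of_nat_mono[OF this]
  have "2 ^ card D * real (card {A. A \<subseteq> {0..<n} \<and> card A = n div 2 \<and> D \<subseteq> A})
      \<le> real (n choose (n div 2))" by simp
  moreover have "2 powr t \<le> 2 ^ card D"
    using assms(2) by (simp add: powr_realpow[symmetric])
  ultimately have "2 powr t * real (card {A. A \<subseteq> {0..<n} \<and> card A = n div 2 \<and> D \<subseteq> A})
      \<le> real (n choose (n div 2))"
    by (meson mult_right_mono of_nat_0_le_iff order_trans)
  then show ?thesis by (simp add: powr_minus field_simps)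
qed

lemma prob_Bad_le:
  assumes "Q \<subseteq> Pow {0..<n}"
  shows "prob_Bad n Q \<le> real (card Q) ^ 2 * 2 powr (- 0.1 * sqrt (real (n div 2)))"
proof -
  define a where "a = n div 2"
  define t where "t = 0.1 * sqrt (real a)"
  define B where "B = {A. A \<subseteq> {0..<n} \<and> card A = a \<and> Bad n Q A}"
  define P where "P = {p \<in> Q \<times> Q. real (card (fst p - snd p)) > t}"
  define S where "S p = {A. A \<subseteq> {0..<n} \<and> card A = a \<and> fst p - snd p \<subseteq> A}" for p
  have "finite Q" using assms by (meson finite_Pow_iff finite_atLeastLessThan finite_subset)
  then have "finite P" unfolding P_def by simp
  have "B \<subseteq> (\<Union>p\<in>P. S p)"
  proof
    fix A assume "A \<in> B"
    then have A: "A \<subseteq> {0..<n}" "card A = a" "Bad n Q A" unfolding B_def by auto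
    obtain x y where "x \<in> Q" "y \<in> Q" "x - y \<subseteq> A" "real (card (x - y)) > t"
      using Bad_obtains_large_difference[OF A(3,1) assms] unfolding t_def a_def .
    then have "(x, y) \<in> P" "A \<in> S (x, y)" using A unfolding P_def S_def by auto
    then show "A \<in> (\<Union>p\<in>P. S p)" by blast
  qed
  moreover have "finite (\<Union>p\<in>P. S p)"
    by (rule finite_subset[of _ "Pow {0..<n}"]) (auto simp: S_def)
  ultimately have "card B \<le> card (\<Union>p\<in>P. S p)" by (intro card_mono)
  also have "\<dots> \<le> (\<Sum>p\<in>P. card (S p))" by (rule card_UN_le[OF \<open>finite P\<close>])
  finally have "real (card B) \<le> (\<Sum>p\<in>P. real (card (S p)))"
    by (simp only: of_nat_sum[symmetric] of_nat_le_iff)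
  also have "\<dots> \<le> (\<Sum>p\<in>P. real (n choose a) * 2 powr (- t))"
  proof (intro sum_mono)
    fix p assume "p \<in> P"
    then have "fst p \<in> Q" "t \<le> real (card (fst p - snd p))" unfolding P_def by auto
    moreover from this(1) have "fst p - snd p \<subseteq> {0..<n}" using assms by blast
    ultimately show "real (card (S p)) \<le> real (n choose a) * 2 powr (- t)"
      unfolding S_def a_def by (intro card_half_subsets_containing_le_powr)
  qed
  also have "\<dots> \<le> real (card Q) ^ 2 * (real (n choose a) * 2 powr (- t))"
  proof -
    have "card P \<le> card (Q \<times> Q)" unfolding P_def using \<open>finite Q\<close> by (intro card_mono) auto
    then have "real (card P) \<le> real (card Q) ^ 2"
      by (simp add: card_cartesian_product power2_eq_square flip: of_nat_mult)
    then show ?thesis by (simp add: mult_right_mono)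
  qed
  finally have "real (card B) \<le> (real (card Q) ^ 2 * 2 powr (- t)) * real (n choose a)"
    by (simp only: mult_ac)
  moreover have "real (n choose a) > 0" unfolding a_def by simp
  moreover have "- 0.1 * sqrt (real (n div 2)) = - t" unfolding t_def a_def by simp
  ultimately show ?thesis
    unfolding prob_Bad_def B_def a_def[symmetric] by (simp only: pos_divide_le_eq)
qed

lemma square_mult_powr_le:
  assumes "even n" "q \<le> 2 powr (0.01 * sqrt (real n))" "q \<ge> 0"
  shows "q ^ 2 * 2 powr (- 0.1 * sqrt (real (n div 2))) \<le> 2 powr (- 0.05 * sqrt (real n))"
proof -
  have "real (n div 2) = real n / 2" using assms(1) by auto
  then have "(0.7 * sqrt (real n)) ^ 2 \<le> real (n div 2)"
    by (simp add: power_mult_distrib power_divide)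
  then have root: "0.7 * sqrt (real n) \<le> sqrt (real (n div 2))" by (rule real_le_rsqrt)
  have "q ^ 2 * 2 powr (- 0.1 * sqrt (real (n div 2)))
      \<le> (2 powr (0.01 * sqrt (real n))) ^ 2 * 2 powr (- 0.1 * sqrt (real (n div 2)))"
    using assms by (intro mult_right_mono power_mono) auto
  also have "\<dots> = 2 powr (0.02 * sqrt (real n) - 0.1 * sqrt (real (n div 2)))"
    by (simp add: power2_eq_square powr_add[symmetric])
  also have "\<dots> \<le> 2 powr (- 0.05 * sqrt (real n))"
    using root by (intro powr_mono) auto
  finally show ?thesis .
qed

theorem mainTheorem14:
  shows "\<forall>\<epsilon>>0. \<exists>N. \<forall>n Q. even n \<longrightarrow> n \<ge> N \<longrightarrow> Q \<subseteq> Pow {0..<n}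
           \<longrightarrow> real (card Q) \<le> 2 powr (0.01 * sqrt (real n))
           \<longrightarrow> prob_Bad n Q \<le> \<epsilon>"
proof (intro allI impI)
  fix \<epsilon> :: real assume "\<epsilon> > 0"
  have "((\<lambda>n::nat. 2 powr (- 0.05 * sqrt (real n))) \<longlongrightarrow> 0) sequentially"
    by real_asymp
  from order_tendstoD(2)[OF this \<open>\<epsilon> > 0\<close>] obtain N
    where N: "\<And>n. n \<ge> N \<Longrightarrow> 2 powr (- 0.05 * sqrt (real n)) < \<epsilon>"
    unfolding eventually_sequentially by blast
  have "prob_Bad n Q \<le> \<epsilon>"
    if "even n" "n \<ge> N" "Q \<subseteq> Pow {0..<n}" "real (card Q) \<le> 2 powr (0.01 * sqrt (real n))"
    for n Q
    using prob_Bad_le[OF that(3)] square_mult_powr_le[OF that(1,4)] N[OF that(2)] by simp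
  then show "\<exists>N. \<forall>n Q. even n \<longrightarrow> n \<ge> N \<longrightarrow> Q \<subseteq> Pow {0..<n}
           \<longrightarrow> real (card Q) \<le> 2 powr (0.01 * sqrt (real n))
           \<longrightarrow> prob_Bad n Q \<le> \<epsilon>" by blast
qed

end
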